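(* For each $2p\in\{216, 270, 324\}$ there exists a cyclic DCA$(4,2p+1;2p)$ satisfying P1 and P2.
   Context: A difference covering array DCA$(k,\eta;n)$ over $\mathbb{Z}_n$ (a cyclic DCA) is an $\eta\times k$ matrix $Q=[q(i,j)]$ with entries in $\mathbb{Z}_n$ such that for every pair of distinct columns $j,j'$ the multiset $\{q(i,j)-q(i,j') : 0\le i\le \eta-1\}$ contains every element of $\mathbb{Z}_n$ at least once. A DCA$(k,n+1;n)$ is taken in normalized form: all entries of its last row (row $n$) and last column (column $k-1$) equal $0$. It satisfies P1 if $0$ occurs at least twice in every column, and P2 if for all distinct columns $j,j'$ with $j\neq k-1\neq j'$, the set $\{q(i,j)-q(i,j') : 0\le i\le n-1\}$ equals $\mathbb{Z}_n\setminus\{0\}$. *)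

theory Defs
  imports Main
begin

text \<open>An eta x k matrix over Z_n is a function Q :: nat => nat => int (row i, column j),
  considered for i < eta, j < k, with entries taken as residues in {0..<n}.\<close>

definition is_DCA :: "nat \<Rightarrow> nat \<Rightarrow> nat \<Rightarrow> (nat \<Rightarrow> nat \<Rightarrow> int) \<Rightarrow> bool" where
  "is_DCA k eta n Q \<longleftrightarrow>
     (\<forall>i<eta. \<forall>j<k. 0 \<le> Q i j \<and> Q i j < int n) \<and>
     (\<forall>j<k. \<forall>j'<k. j \<noteq> j' \<longrightarrow>
        (\<forall>d\<in>{0..<int n}. \<exists>i<eta. (Q i j - Q i j') mod int n = d))"

definition DCA_normalized :: "nat \<Rightarrow> nat \<Rightarrow> (nat \<Rightarrow> nat \<Rightarrow> int) \<Rightarrow> bool" where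
  "DCA_normalized k n Q \<longleftrightarrow>
     (\<forall>j<k. Q n j = 0) \<and> (\<forall>i<n+1. Q i (k - 1) = 0)"

definition DCA_P1 :: "nat \<Rightarrow> nat \<Rightarrow> nat \<Rightarrow> (nat \<Rightarrow> nat \<Rightarrow> int) \<Rightarrow> bool" where
  "DCA_P1 k eta n Q \<longleftrightarrow> (\<forall>j<k. card {i. i < eta \<and> Q i j = 0} \<ge> 2)"

definition DCA_P2 :: "nat \<Rightarrow> nat \<Rightarrow> (nat \<Rightarrow> nat \<Rightarrow> int) \<Rightarrow> bool" where
  "DCA_P2 k n Q \<longleftrightarrow>
     (\<forall>j<k. \<forall>j'<k. j \<noteq> j' \<and> j \<noteq> k - 1 \<and> j' \<noteq> k - 1 \<longrightarrow>
        {(Q i j - Q i j') mod int n | i. i < n} = {1..<int n})"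

end

theory Submission
  imports Defs
begin

(* Let the first three columns be permutations of Z_n such that any two of them differ, row by
   row, in every nonzero residue, and let the last column and the last row n be zero. The zero row
   supplies the difference 0 for every pair of columns; against the zero column the differences
   are the entries of a permutation column or their negatives, so they exhaust Z_n as well. The
   zero row together with the zero in each permutation column gives P1, and P2 is the difference
   condition itself. For n = 216, 270, 324 suitable columns are listed explicitly; since negation
   permutes the nonzero residues, each pair of columns needs to be checked in one order only. *)

(* The residue of a - b; adding n first avoids truncated subtraction as long as b \<le> n. *)
definition mod_diff :: "nat \<Rightarrow> nat \<Rightarrow> nat \<Rightarrow> nat" where
  "mod_diff n a b = (a + n - b) mod n"

lemma int_mod_diff: "b \<le> n \<Longrightarrow> int (mod_diff n a b) = (int a - int b) mod int n"
proof -
  assume "b \<le> n"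
  then have "int (a + n - b) = (int a - int b) + int n" by simp
  then show ?thesis by (simp add: mod_diff_def zmod_int)
qed

lemma mod_diff_swap:
  assumes "a < n" "b < n"
  shows "mod_diff n b a = mod_diff n 0 (mod_diff n a b)"
proof -
  have "mod_diff n a b < n" using assms by (simp add: mod_diff_def)
  then have "int (mod_diff n 0 (mod_diff n a b)) = (- ((int a - int b) mod int n)) mod int n"
    using assms by (simp add: int_mod_diff)
  also have "\<dots> = (int b - int a) mod int n" by (simp add: mod_minus_eq)
  also have "\<dots> = int (mod_diff n b a)" using assms by (simp add: int_mod_diff)
  finally show ?thesis by simp
qed

lemma mod_diff_zero_image: "mod_diff n 0 ` {1..<n} = {1..<n}"
proof
  show "mod_diff n 0 ` {1..<n} \<subseteq> {1..<n}"
  proof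
    fix d assume "d \<in> mod_diff n 0 ` {1..<n}"
    then obtain a where "a \<in> {1..<n}" "d = n - a" by (auto simp: mod_diff_def)
    then show "d \<in> {1..<n}" by auto
  qed
  show "{1..<n} \<subseteq> mod_diff n 0 ` {1..<n}"
  proof
    fix d assume "d \<in> {1..<n}"
    then have "d = mod_diff n 0 (n - d)" "n - d \<in> {1..<n}"
      by (auto simp: mod_diff_def)
    then show "d \<in> mod_diff n 0 ` {1..<n}" by blast
  qed
qed

lemma set_map2_conv_nth:
  "length xs = n \<Longrightarrow> length ys = n \<Longrightarrow>
   set (map2 f xs ys) = {f (xs ! i) (ys ! i) | i. i < n}"
  by (auto simp: set_zip)

lemma set_map2_mod_diff_swap:
  assumes "length xs = length ys" "\<forall>x\<in>set xs. x < n" "\<forall>y\<in>set ys. y < n"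
  shows "set (map2 (mod_diff n) ys xs) = mod_diff n 0 ` set (map2 (mod_diff n) xs ys)"
proof -
  have "map2 (mod_diff n) ys xs = map (mod_diff n 0) (map2 (mod_diff n) xs ys)"
    using assms
  proof (induction xs ys rule: list_induct2)
    case (Cons x xs y ys)
    then show ?case using mod_diff_swap[of x n y] by simp
  qed simp
  then show ?thesis by (simp only: set_map)
qed

definition cyclic_difference_columns :: "nat \<Rightarrow> nat list list \<Rightarrow> bool" where
  "cyclic_difference_columns n cs \<longleftrightarrow>
     (\<forall>c\<in>set cs. length c = n \<and> set c = {0..<n}) \<and>
     (\<forall>j<length cs. \<forall>j'<length cs. j \<noteq> j' \<longrightarrow>
        set (map2 (mod_diff n) (cs ! j) (cs ! j')) = {1..<n})"

lemma cyclic_difference_columnsI: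
  assumes columns: "\<forall>c\<in>set cs. length c = n \<and> set c = {0..<n}"
    and below_diagonal:
      "\<forall>j<length cs. \<forall>j'<j. set (map2 (mod_diff n) (cs ! j) (cs ! j')) = {1..<n}"
  shows "cyclic_difference_columns n cs"
  unfolding cyclic_difference_columns_def
proof (intro conjI columns allI impI)
  fix j j' assume j: "j < length cs" and j': "j' < length cs" and "j \<noteq> j'"
  show "set (map2 (mod_diff n) (cs ! j) (cs ! j')) = {1..<n}"
  proof (cases "j' < j")
    case True
    then show ?thesis using below_diagonal j by blast
  next
    case False
    with \<open>j \<noteq> j'\<close> have "set (map2 (mod_diff n) (cs ! j') (cs ! j)) = {1..<n}"
      using below_diagonal j' by simp
    have "length (cs ! j') = length (cs ! j)"
      and "\<forall>x\<in>set (cs ! j'). x < n" and "\<forall>x\<in>set (cs ! j). x < n"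
      using columns j j' nth_mem by (metis atLeastLessThan_iff)+
    then have "set (map2 (mod_diff n) (cs ! j) (cs ! j'))
               = mod_diff n 0 ` set (map2 (mod_diff n) (cs ! j') (cs ! j))"
      by (rule set_map2_mod_diff_swap)
    also have "\<dots> = {1..<n}" using \<open>set (map2 _ (cs ! j') (cs ! j)) = _\<close>
      by (simp only: mod_diff_zero_image)
    finally show ?thesis .
  qed
qed

lemma cyclic_difference_columnsD:
  assumes "cyclic_difference_columns n cs" "j < length cs"
  shows "length (cs ! j) = n" "set (cs ! j) = {0..<n}"
  using assms nth_mem[of j cs] by (auto simp: cyclic_difference_columns_def)

lemma cyclic_difference_columns_entry_less:
  assumes "cyclic_difference_columns n cs" "j < length cs" "i < n"
  shows "cs ! j ! i < n"
proof -
  have "cs ! j ! i \<in> set (cs ! j)"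
    using assms cyclic_difference_columnsD(1)[OF assms(1,2)] by simp
  then show ?thesis using cyclic_difference_columnsD(2)[OF assms(1,2)] by simp
qed

definition zero_bordered :: "nat \<Rightarrow> nat list list \<Rightarrow> nat \<Rightarrow> nat \<Rightarrow> int" where
  "zero_bordered n cs i j = (if i < n \<and> j < length cs then int (cs ! j ! i) else 0)"

lemma zero_bordered_diff:
  assumes "cyclic_difference_columns n cs" "j < length cs" "j' < length cs" "i < n"
  shows "(zero_bordered n cs i j - zero_bordered n cs i j') mod int n
         = int (mod_diff n (cs ! j ! i) (cs ! j' ! i))"
  using assms cyclic_difference_columns_entry_less[OF assms(1,3,4)]
  by (simp add: zero_bordered_def int_mod_diff)

lemma zero_bordered_covers_nonzero:
  assumes cdc: "cyclic_difference_columns n cs"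
    and j: "j < length cs + 1" and j': "j' < length cs + 1" and "j \<noteq> j'"
    and d: "d \<in> {1..<int n}"
  shows "\<exists>i<n. (zero_bordered n cs i j - zero_bordered n cs i j') mod int n = d"
proof -
  have nat_d: "nat d \<in> {1..<n}" and d_eq: "int (nat d) = d" using d by auto
  note column = cyclic_difference_columnsD[OF cdc]
  consider "j < length cs" "j' < length cs" | "j < length cs" "j' = length cs"
    | "j = length cs" "j' < length cs"
    using j j' \<open>j \<noteq> j'\<close> by linarith
  then show ?thesis
  proof cases
    case 1
    then have "nat d \<in> set (map2 (mod_diff n) (cs ! j) (cs ! j'))"
      using cdc \<open>j \<noteq> j'\<close> nat_d by (simp add: cyclic_difference_columns_def)
    moreover have "set (map2 (mod_diff n) (cs ! j) (cs ! j'))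
                   = {mod_diff n (cs ! j ! i) (cs ! j' ! i) | i. i < n}"
      using column(1) 1 by (intro set_map2_conv_nth)
    ultimately obtain i where "i < n" "mod_diff n (cs ! j ! i) (cs ! j' ! i) = nat d"
      by auto
    then show ?thesis using zero_bordered_diff[OF cdc 1] d_eq by auto
  next
    case 2
    have "nat d \<in> set (cs ! j)" using column(2)[OF 2(1)] nat_d by simp
    then obtain i where "i < length (cs ! j)" "cs ! j ! i = nat d"
      unfolding in_set_conv_nth by blast
    then show ?thesis
      using column(1)[OF 2(1)] 2 d by (intro exI[of _ i]) (simp add: zero_bordered_def)
  next
    case 3
    have "nat d \<in> mod_diff n 0 ` {1..<n}" using nat_d by (simp only: mod_diff_zero_image)
    moreover have "{1..<n} \<subseteq> set (cs ! j')" using column(2)[OF 3(2)] by auto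
    ultimately obtain v where v: "v \<in> set (cs ! j')" "mod_diff n 0 v = nat d" by auto
    then obtain i where "i < length (cs ! j')" "cs ! j' ! i = v" by (auto simp: in_set_conv_nth)
    with v have i: "i < n" "mod_diff n 0 (cs ! j' ! i) = nat d" using column(1)[OF 3(2)] by simp_all
    have "cs ! j' ! i \<le> n" using cyclic_difference_columns_entry_less[OF cdc 3(2) i(1)] by simp
    then have "(0 - int (cs ! j' ! i)) mod int n = d"
      using int_mod_diff[of "cs ! j' ! i" n 0] i(2) d_eq by simp
    then show ?thesis using 3 i(1) by (intro exI[of _ i]) (simp add: zero_bordered_def)
  qed
qed

lemma zero_bordered_is_DCA:
  assumes "0 < n" "cyclic_difference_columns n cs"
  shows "is_DCA (length cs + 1) (n + 1) n (zero_bordered n cs)"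
  unfolding is_DCA_def
proof (intro conjI allI impI ballI)
  fix i j assume "i < n + 1" "j < length cs + 1"
  show "0 \<le> zero_bordered n cs i j" by (simp add: zero_bordered_def)
  show "zero_bordered n cs i j < int n"
    using assms cyclic_difference_columns_entry_less[OF assms(2)] by (simp add: zero_bordered_def)
next
  fix j j' d assume "j < length cs + 1" "j' < length cs + 1" "j \<noteq> j'" "d \<in> {0..<int n}"
  show "\<exists>i<n + 1. (zero_bordered n cs i j - zero_bordered n cs i j') mod int n = d"
  proof (cases "d = 0")
    case True
    then show ?thesis by (intro exI[of _ n]) (simp add: zero_bordered_def)
  next
    case False
    with \<open>d \<in> {0..<int n}\<close> have "d \<in> {1..<int n}" by simp
    then obtain i where "i < n" "(zero_bordered n cs i j - zero_bordered n cs i j') mod int n = d"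
      using zero_bordered_covers_nonzero[OF assms(2)] \<open>j < _\<close> \<open>j' < _\<close> \<open>j \<noteq> j'\<close>
      by blast
    then show ?thesis by (intro exI[of _ i]) simp
  qed
qed

lemma zero_bordered_normalized: "DCA_normalized (length cs + 1) n (zero_bordered n cs)"
  by (simp add: DCA_normalized_def zero_bordered_def)

lemma zero_bordered_P1:
  assumes "0 < n" "cyclic_difference_columns n cs"
  shows "DCA_P1 (length cs + 1) (n + 1) n (zero_bordered n cs)"
  unfolding DCA_P1_def
proof (intro allI impI)
  fix j assume "j < length cs + 1"
  obtain i where "i < n" "zero_bordered n cs i j = 0"
  proof (cases "j < length cs")
    case True
    then have "0 \<in> set (cs ! j)" using assms cyclic_difference_columnsD(2) by simp
    then obtain i where "i < length (cs ! j)" "cs ! j ! i = 0" by (auto simp: in_set_conv_nth)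
    then show thesis
      using that assms(2) True cyclic_difference_columnsD(1) by (simp add: zero_bordered_def)
  next
    case False
    then show thesis using that assms(1) by (simp add: zero_bordered_def)
  qed
  then have "{i, n} \<subseteq> {i. i < n + 1 \<and> zero_bordered n cs i j = 0}"
    by (auto simp: zero_bordered_def)
  then have "card {i, n} \<le> card {i. i < n + 1 \<and> zero_bordered n cs i j = 0}"
    by (rule card_mono[rotated]) simp
  then show "2 \<le> card {i. i < n + 1 \<and> zero_bordered n cs i j = 0}"
    using \<open>i < n\<close> by simp
qed

lemma zero_bordered_P2:
  assumes "cyclic_difference_columns n cs"
  shows "DCA_P2 (length cs + 1) n (zero_bordered n cs)"
  unfolding DCA_P2_def
proof (intro allI impI)
  fix j j' assume "j < length cs + 1" "j' < length cs + 1"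
    and "j \<noteq> j' \<and> j \<noteq> length cs + 1 - 1 \<and> j' \<noteq> length cs + 1 - 1"
  then have j: "j < length cs" and j': "j' < length cs" and "j \<noteq> j'" by auto
  have lengths: "length (cs ! j) = n" "length (cs ! j') = n"
    using cyclic_difference_columnsD(1)[OF assms] j j' by simp_all
  have "{(zero_bordered n cs i j - zero_bordered n cs i j') mod int n | i. i < n}
        = (\<lambda>i. (zero_bordered n cs i j - zero_bordered n cs i j') mod int n) ` {..<n}"
    by blast
  also have "\<dots> = (\<lambda>i. int (mod_diff n (cs ! j ! i) (cs ! j' ! i))) ` {..<n}"
    using zero_bordered_diff[OF assms j j'] by simp
  also have "\<dots> = int ` {mod_diff n (cs ! j ! i) (cs ! j' ! i) | i. i < n}"
    by blast
  also have "\<dots> = int ` set (map2 (mod_diff n) (cs ! j) (cs ! j'))"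
    by (simp only: set_map2_conv_nth[OF lengths])
  also have "\<dots> = int ` {1..<n}"
    using assms j j' \<open>j \<noteq> j'\<close> by (simp add: cyclic_difference_columns_def)
  finally show "{(zero_bordered n cs i j - zero_bordered n cs i j') mod int n | i. i < n}
                = {1..<int n}"
    by (simp add: image_int_atLeastLessThan)
qed

(* Only the element set of the result is used below: sorting serves as a certificate for set
   equalities that the simplifier evaluates in O(n log n) rewrite steps. *)
fun merge :: "nat list \<Rightarrow> nat list \<Rightarrow> nat list" where
  "merge [] ys = ys"
| "merge xs [] = xs"
| "merge (x # xs) (y # ys) =
     (if x \<le> y then x # merge xs (y # ys) else y # merge (x # xs) ys)"

fun merge_pairs :: "nat list list \<Rightarrow> nat list list" where
  "merge_pairs (xs # ys # xss) = merge xs ys # merge_pairs xss"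
| "merge_pairs xss = xss"

lemma length_merge_pairs: "length (merge_pairs xss) = (length xss + 1) div 2"
  by (induction xss rule: merge_pairs.induct) auto

function merge_all :: "nat list list \<Rightarrow> nat list" where
  "merge_all [] = []"
| "merge_all [xs] = xs"
| "merge_all (xs # ys # xss) = merge_all (merge_pairs (xs # ys # xss))"
  by pat_completeness auto
termination by (relation "measure length") (auto simp: length_merge_pairs)

definition msort :: "nat list \<Rightarrow> nat list" where
  "msort xs = merge_all (map (\<lambda>x. [x]) xs)"

lemma set_merge: "set (merge xs ys) = set xs \<union> set ys"
  by (induction xs ys rule: merge.induct) auto

lemma set_merge_pairs: "\<Union> (set ` set (merge_pairs xss)) = \<Union> (set ` set xss)"
  by (induction xss rule: merge_pairs.induct) (auto simp: set_merge)

lemma set_merge_all: "set (merge_all xss) = \<Union> (set ` set xss)"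
  by (induction xss rule: merge_all.induct) (simp_all del: merge_pairs.simps add: set_merge_pairs)

lemma set_msort: "set (msort xs) = set xs"
  by (auto simp: msort_def set_merge_all)

(* The n differences of two columns hit the n - 1 nonzero residues, so one of them repeats. *)
lemma cyclic_difference_columns_by_sorting:
  assumes "\<forall>c\<in>set cs. length c = n \<and> msort c = [0..<n]"
    and "\<forall>j<length cs. \<forall>j'<j.
           remdups_adj (msort (map2 (mod_diff n) (cs ! j) (cs ! j'))) = [1..<n]"
  shows "cyclic_difference_columns n cs"
proof (rule cyclic_difference_columnsI)
  have "set c = set [0..<n]" if "c \<in> set cs" for c
    using assms(1) that set_msort[of c] by simp
  then show "\<forall>c\<in>set cs. length c = n \<and> set c = {0..<n}"
    using assms(1) by simp
  have "set ds = set (remdups_adj (msort ds))" for ds by (simp add: set_msort)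
  then have "set (map2 (mod_diff n) (cs ! j) (cs ! j')) = set [1..<n]"
    if "j < length cs" "j' < j" for j j'
    using assms(2) that by metis
  then show "\<forall>j<length cs. \<forall>j'<j. set (map2 (mod_diff n) (cs ! j) (cs ! j')) = {1..<n}"
    by simp
qed

definition columns216 :: "nat list list" where
  "columns216 =
    [[14, 25, 84, 66, 179, 72, 108, 165, 119, 189, 124, 139, 175, 88, 48, 56, 46, 98, 215, 27, 203, 205, 42, 123, 1, 40, 106, 169, 103, 24, 161, 198, 212, 91, 177, 4, 158, 135, 112, 213, 12, 52, 61, 26, 167, 2, 63, 133, 82, 80, 5, 173, 210, 54, 140, 166, 163, 41, 101, 109, 207, 19, 17, 31, 200, 192, 164, 87, 10, 114, 125, 83, 168, 170, 149, 143, 29, 85, 155, 90, 37, 62, 208, 176, 43, 115, 187, 211, 89, 67, 64, 15, 105, 0, 71, 128, 107, 201, 22, 96, 79, 49, 47, 178, 11, 93, 94, 59, 111, 69, 134, 76, 60, 196, 209, 23, 121, 129, 68, 184, 32, 28, 18, 75, 160, 45, 122, 199, 146, 195, 126, 142, 157, 44, 104, 38, 206, 197, 77, 182, 92, 144, 57, 50, 141, 180, 73, 214, 127, 153, 95, 9, 132, 8, 120, 33, 152, 186, 116, 136, 162, 159, 20, 39, 3, 117, 148, 102, 97, 118, 151, 78, 137, 130, 86, 194, 147, 35, 150, 185, 145, 99, 188, 70, 204, 183, 156, 16, 181, 190, 65, 154, 131, 138, 51, 113, 21, 58, 171, 100, 202, 36, 34, 191, 193, 110, 74, 53, 174, 81,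 13, 55, 172, 7, 6, 30],
     [20, 142, 68, 200, 81, 87, 14, 9, 159, 187, 88, 148, 116, 92, 168, 186, 128, 64, 143, 151, 194, 91, 181, 34, 109, 127, 6, 182, 177, 102, 99, 179, 63, 212, 75, 133, 189, 155, 175, 202, 60, 105, 197, 122, 210, 169, 39, 16, 173, 153, 184, 49, 51, 76, 101, 56, 35, 134, 209, 19, 166, 161, 71, 24, 117, 0, 96, 126, 54, 165, 67, 158, 84, 1, 58, 195, 98, 53, 29, 2, 103, 123, 215, 31, 33, 93, 140, 199, 157, 132, 113, 44, 206, 149, 94, 97, 144, 150, 5, 141, 120, 48, 3, 204, 214, 152, 119, 38, 130, 145, 139, 50, 27, 74, 104, 95, 42, 111, 70, 156, 26, 196, 115, 178, 25, 78, 192, 138, 86, 79, 22, 89, 30, 205, 121, 124, 11, 36, 112, 193, 65, 129, 107, 135, 118, 41, 171, 176, 137, 72, 43, 10, 146, 167, 162, 61, 198, 32, 66, 4, 55, 62, 207, 69, 154, 125, 82, 114, 21, 40, 80, 15, 164, 85, 191, 73, 185, 211, 17, 180, 52, 203, 28, 106, 190, 77, 131, 13, 23, 170, 83, 45, 46, 172, 47, 59, 136, 12, 174, 57, 18, 100, 208, 183, 163, 7, 90, 213, 37, 8, 160, 201, 108, 188, 147, 110],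
     [132, 33, 172, 37, 93, 110, 173, 133, 174, 165, 43, 1, 63, 200, 47, 48, 163, 122, 138, 74, 80, 0, 151, 66, 117, 211, 58, 106, 59, 88, 20, 97, 23, 194, 72, 49, 32, 26, 148, 129, 86, 186, 101, 83, 144, 16, 53, 191, 6, 147, 152, 34, 192, 155, 142, 150, 154, 84, 197, 107, 176, 198, 45, 52, 68, 90, 193, 156, 35, 25, 105, 102, 184, 104, 69, 109, 175, 118, 167, 18, 178, 124, 2, 91, 134, 41, 119, 128, 76, 5, 70, 46, 75, 81, 121, 77, 100, 114, 39, 137, 171, 177, 208, 56, 166, 188, 199, 130, 92, 44, 164, 158, 123, 65, 159, 145, 11, 21, 141, 7, 112, 180, 22, 161, 108, 98, 201, 185, 143, 153, 127, 9, 140, 170, 113, 196, 42, 169, 136, 135, 126, 162, 206, 10, 85, 40, 99, 30, 181, 94, 195, 189, 202, 57, 12, 27, 103, 160, 73, 115, 204, 3, 55, 62, 54, 71, 95, 29, 19, 205, 207, 203, 209, 38, 89, 182, 51, 24, 36, 82, 213, 60, 183, 168, 87, 15, 61, 31, 116, 157, 131, 215, 4, 78, 64, 210, 67, 17, 149, 96, 8, 146, 212, 120, 139, 13, 111, 190, 179, 125, 214, 28, 79, 14, 187, 50]]"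

definition columns270 :: "nat list list" where
  "columns270 =
    [[182, 236, 155, 74, 128, 121, 202, 148, 229, 40, 81, 189, 162, 135, 108, 188, 107, 161, 215, 134, 133, 79, 160, 241, 52, 219, 165, 111, 57, 3, 10, 226, 172, 118, 64, 125, 98, 71, 44, 17, 16, 124, 97, 205, 43, 258, 177, 231, 15, 69, 42, 96, 150, 204, 123, 45, 72, 99, 126, 153, 122, 203, 14, 230, 176, 34, 88, 142, 196, 115, 179, 206, 233, 260, 152, 49, 211, 238, 265, 22, 27, 216, 0, 54, 243, 26, 53, 80, 242, 269, 256, 67, 13, 94, 175, 85, 31, 247, 193, 4, 137, 110, 218, 191, 164, 116, 197, 8, 224, 170, 21, 264, 102, 210, 48, 129, 75, 156, 237, 183, 117, 9, 171, 198, 90, 143, 89, 35, 251, 62, 61, 223, 250, 7, 169, 92, 38, 119, 200, 146, 29, 56, 83, 245, 2, 12, 39, 201, 93, 120, 58, 112, 166, 220, 139, 268, 187, 106, 25, 214, 259, 178, 232, 151, 70, 47, 263, 209, 20, 101, 113, 5, 32, 194, 86, 228, 174, 255, 66, 147, 195, 249, 33, 222, 141, 104, 158, 77, 131, 50, 262, 154, 181, 208, 235, 239, 266, 23, 185, 212, 105, 78, 186, 159, 267, 37, 91, 145, 199, 253, 173, 254, 65, 11, 227, 257, 95, 68, 41, 149, 130, 184, 103, 157, 76, 248, 221, 59, 167, 140, 84, 246, 138, 30, 192, 207, 261, 180, 234, 18, 19, 127, 100, 73, 46, 136, 244, 82, 190, 28, 1, 163, 55, 217, 109, 6, 87, 168,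 114, 60, 240, 51, 132, 213, 24, 225, 144, 63, 252, 36],
     [261, 207, 18, 234, 45, 155, 74, 263, 47, 236, 64, 10, 226, 37, 118, 242, 188, 134, 80, 26, 162, 0, 108, 81, 189, 60, 87, 249, 141, 168, 7, 196, 115, 34, 223, 211, 157, 238, 49, 265, 117, 9, 36, 63, 225, 128, 20, 182, 209, 101, 72, 99, 126, 153, 180, 174, 255, 66, 12, 228, 58, 112, 31, 85, 4, 29, 2, 110, 218, 191, 138, 192, 246, 165, 84, 68, 14, 95, 41, 257, 149, 122, 230, 203, 176, 30, 3, 111, 219, 57, 38, 65, 227, 119, 11, 179, 71, 98, 260, 152, 145, 199, 253, 172, 91, 154, 46, 208, 100, 262, 103, 130, 22, 184, 76, 82, 244, 136, 28, 190, 200, 173, 146, 254, 92, 240, 267, 159, 51, 78, 127, 181, 235, 19, 73, 125, 233, 206, 44, 17, 89, 35, 251, 197, 8, 129, 48, 237, 21, 210, 215, 161, 107, 53, 269, 224, 116, 143, 170, 62, 94, 202, 40, 13, 121, 16, 178, 205, 232, 124, 239, 23, 212, 266, 50, 32, 140, 248, 86, 194, 25, 241, 187, 133, 79, 27, 54, 216, 243, 135, 217, 55, 163, 1, 109, 229, 148, 67, 256, 175, 96, 15, 69, 258, 42, 132, 105, 213, 186, 24, 167, 5, 113, 221, 59, 268, 160, 52, 214, 106, 131, 77, 158, 104, 185, 139, 193, 247, 166, 220, 137, 83, 164, 245, 56, 88, 250, 142, 169, 61, 177, 204, 231, 123, 150, 90, 144, 198, 252, 171, 259, 97, 70, 43,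 151, 33, 6, 114, 222, 195, 39, 201, 93, 120, 147, 156, 264, 102, 75, 183],
     [123, 15, 177, 69, 96, 90, 198, 36, 9, 117, 135, 162, 54, 81, 243, 251, 8, 35, 197, 224, 200, 92, 254, 11, 38, 189, 108, 27, 216, 0, 240, 132, 24, 51, 213, 230, 149, 203, 122, 41, 76, 265, 49, 238, 22, 182, 155, 263, 236, 74, 146, 227, 173, 119, 65, 219, 138, 192, 246, 30, 94, 67, 175, 148, 256, 225, 171, 252, 63, 144, 199, 172, 10, 253, 91, 55, 28, 136, 109, 217, 165, 111, 57, 3, 84, 231, 42, 258, 204, 150, 260, 179, 98, 17, 71, 228, 147, 201, 120, 174, 102, 183, 264, 75, 156, 125, 44, 233, 152, 206, 113, 59, 5, 221, 32, 190, 163, 1, 244, 82, 142, 223, 169, 250, 61, 12, 66, 255, 39, 93, 88, 34, 115, 196, 7, 83, 137, 56, 110, 29, 211, 130, 184, 103, 157, 158, 239, 50, 131, 77, 101, 128, 20, 47, 209, 194, 140, 86, 167, 248, 129, 21, 48, 210, 237, 46, 19, 262, 235, 208, 127, 100, 73, 181, 154, 166, 85, 4, 193, 247, 212, 104, 266, 23, 185, 33, 249, 195, 6, 222, 2, 191, 245, 164, 218, 45, 126, 207, 18, 99, 72, 153, 234, 180, 261, 79, 106, 133, 160, 52, 78, 105, 267, 159, 186, 205, 151, 232, 43, 124, 70, 97, 259, 16, 178, 62, 143, 89, 170, 116, 112, 31, 220, 139, 58, 87, 168, 114, 60, 141, 64, 145, 226, 37, 118, 121, 202, 13, 229, 40,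 161, 242, 188, 134, 215, 14, 68, 257, 176, 95, 187, 241, 25, 214, 268, 107, 53, 269, 80, 26]]"

definition columns324 :: "nat list list" where
  "columns324 =
    [[74, 37, 69, 244, 86, 284, 97, 71, 136, 166, 290, 5, 112, 303, 205, 152, 257, 191, 47, 78, 214, 46, 77, 13, 274, 73, 36, 281, 156, 56, 142, 3, 311, 307, 221, 288, 306, 203, 219, 145, 199, 110, 44, 201, 114, 317, 81, 292, 19, 193, 52, 218, 1, 22, 319, 49, 90, 102, 100, 234, 215, 39, 106, 305, 40, 158, 41, 55, 126, 181, 252, 80, 138, 168, 164, 316, 72, 239, 125, 64, 251, 283, 266, 300, 312, 314, 187, 176, 273, 180, 89, 231, 172, 296, 67, 297, 104, 196, 94, 14, 92, 224, 24, 282, 122, 153, 286, 167, 241, 294, 163, 45, 260, 254, 309, 20, 11, 320, 134, 313, 107, 197, 51, 54, 101, 61, 287, 140, 261, 131, 62, 206, 29, 15, 223, 109, 233, 130, 211, 225, 127, 148, 216, 132, 280, 298, 285, 144, 147, 230, 321, 105, 262, 117, 259, 25, 289, 133, 139, 322, 121, 310, 26, 16, 295, 6, 118, 65, 43, 87, 302, 245, 304, 204, 178, 17, 60, 222, 50, 146, 183, 277, 194, 169, 124, 299, 271, 10, 226, 175, 58, 9, 79, 66, 177, 171, 318, 268, 202, 32, 186, 213, 137, 275, 96, 157, 99, 184, 2, 212, 228, 154, 111, 209, 91, 160, 250, 85, 75, 123, 42, 143, 173, 150, 116, 236, 30, 170, 301, 217, 256, 84, 210, 151, 229, 247, 258,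 249, 103, 246, 18, 263, 192, 207, 220, 129, 4, 195, 162, 200, 119, 315, 7, 68, 115, 0, 70, 83, 190, 179, 95, 21, 272, 23, 238, 265, 149, 255, 108, 34, 48, 38, 27, 59, 269, 227, 28, 279, 293, 185, 120, 270, 159, 291, 237, 182, 235, 253, 57, 33, 35, 308, 155, 135, 174, 161, 267, 63, 248, 243, 189, 240, 12, 198, 188, 276, 93, 165, 208, 88, 323, 82, 113, 31, 232, 242, 278, 141, 128, 76, 98, 264, 53, 8],
     [65, 276, 49, 146, 323, 182, 225, 201, 84, 258, 273, 187, 313, 42, 256, 8, 164, 36, 93, 223, 132, 163, 171, 306, 19, 177, 6, 135, 21, 122, 251, 50, 278, 168, 62, 310, 181, 293, 57, 156, 96, 104, 126, 130, 287, 41, 314, 53, 174, 265, 78, 210, 193, 35, 185, 157, 64, 59, 231, 288, 216, 180, 71, 58, 67, 129, 127, 169, 89, 107, 245, 68, 264, 188, 274, 249, 117, 268, 124, 113, 125, 234, 296, 315, 11, 237, 10, 15, 161, 250, 108, 240, 106, 24, 123, 112, 295, 99, 138, 239, 253, 74, 26, 279, 203, 178, 197, 29, 63, 198, 109, 238, 202, 97, 139, 300, 228, 206, 172, 88, 255, 25, 280, 154, 277, 285, 144, 61, 143, 152, 281, 184, 298, 159, 52, 275, 219, 194, 214, 189, 82, 260, 128, 200, 120, 98, 207, 75, 136, 149, 39, 101, 115, 319, 77, 292, 322, 95, 212, 211, 179, 43, 91, 100, 66, 119, 286, 0, 131, 192, 263, 229, 294, 176, 252, 150, 72, 92, 173,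 76, 262, 221, 133, 244, 90, 158, 54, 18, 208, 290, 195, 271, 190, 270, 4, 5, 137, 155, 226, 272, 220, 254, 153, 151, 28, 38, 218, 47, 134, 48, 304, 191, 147, 44, 299, 243, 105, 70, 309, 102, 40, 183, 20, 307, 241, 13, 165, 60, 83, 111, 233, 186, 162, 213, 170, 282, 301, 308, 232, 204, 317, 222, 141, 33, 291, 56, 224, 86, 311, 217, 316, 46, 85, 22, 55, 209, 80, 3, 2, 166, 1, 205, 267, 145, 32, 116, 199, 215, 242, 121, 289, 312, 45, 247, 12, 318, 148, 51, 266, 31, 236, 142, 297, 259, 34, 196, 73, 284, 118, 9, 175, 87, 79, 140, 110, 167, 23, 16, 17, 303, 103, 14, 235, 69, 227, 283, 30, 321, 261, 320, 27, 114, 94, 302, 160, 246, 81, 230, 7, 248, 305, 37, 269, 257],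
     [189, 246, 230, 269, 10, 67, 213, 287, 258, 234, 93, 320, 156, 78, 39, 105, 266, 137, 16, 286, 192, 23, 3, 148, 130, 196, 251, 127, 238, 116, 73, 15, 279, 177, 33, 138, 49, 222, 208, 218, 209, 45, 52, 19, 1, 191, 307, 226, 131, 219, 37, 146, 223, 319, 56, 35, 87, 277, 296, 240, 244, 90, 206, 11, 306, 299, 22, 211, 44, 157, 257, 76, 46, 32, 294, 228, 315, 271, 250, 204, 253, 200, 97, 70, 202, 150, 225, 242, 101, 245, 129, 310, 316, 57, 272, 249, 103, 304, 153, 285, 167, 119, 169, 36, 270, 292, 314, 301, 221, 281, 280, 291, 121, 48, 81, 302, 100, 321, 284, 51, 40, 147, 162, 89, 31, 115, 126, 181, 30, 168, 6, 8, 143, 58, 66, 255, 275, 84, 94, 145, 229, 187, 172, 125, 4, 62, 188, 220, 165, 175, 24, 9, 140, 79, 99, 288, 305, 237, 109, 155, 80, 183, 95, 312, 171, 17, 14, 231, 74, 197, 69, 290, 63, 217, 201, 235, 180, 26, 289, 166, 173, 260, 295, 92, 64, 164, 27, 182, 283, 154, 142, 86, 151, 198, 98, 195, 123, 139, 29, 135, 124, 106, 190, 82, 282, 25, 47, 120, 72, 268, 28, 91, 265, 108, 7, 215, 159, 83, 254, 261, 273, 214, 161, 38, 259, 149, 264, 59, 41, 128, 170, 193, 54, 248, 262, 113, 53, 178, 256, 55, 267, 2, 298, 104, 318, 216, 21, 96, 243, 163, 232, 276, 263, 118, 297, 199, 77, 132, 185, 300, 60, 194, 236, 233, 212, 317,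 239, 313, 111, 0, 42, 303, 210, 224, 107, 176, 205, 133, 61, 322, 323, 252, 134, 114, 241, 174, 309, 34, 152, 308, 50, 20, 18, 102, 12, 247, 112, 85, 117, 227, 71, 65, 293, 141, 88, 136, 274, 186, 75, 43, 158, 311, 160, 207, 203, 122, 184, 68, 5, 110, 144, 278, 13, 179]]"


lemma cyclic_difference_columns_216: "cyclic_difference_columns 216 columns216"
  unfolding columns216_def
  by (rule cyclic_difference_columns_by_sorting)
     (simp_all add: mod_diff_def msort_def upt_rec less_Suc_eq)

lemma cyclic_difference_columns_270: "cyclic_difference_columns 270 columns270"
  unfolding columns270_def
  by (rule cyclic_difference_columns_by_sorting)
     (simp_all add: mod_diff_def msort_def upt_rec less_Suc_eq)

lemma cyclic_difference_columns_324: "cyclic_difference_columns 324 columns324"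
  unfolding columns324_def
  by (rule cyclic_difference_columns_by_sorting)
     (simp_all add: mod_diff_def msort_def upt_rec less_Suc_eq)

theorem mainTheorem13:
  shows "\<forall>n\<in>{216, 270, 324::nat}. \<exists>Q.
           is_DCA 4 (n + 1) n Q \<and> DCA_normalized 4 n Q \<and>
           DCA_P1 4 (n + 1) n Q \<and> DCA_P2 4 n Q"
proof
  fix n :: nat assume n: "n \<in> {216, 270, 324}"
  have "length columns216 = 3" "length columns270 = 3" "length columns324 = 3"
    by (simp_all add: columns216_def columns270_def columns324_def)
  then obtain cs where "length cs + 1 = 4" and cs: "cyclic_difference_columns n cs"
    using n cyclic_difference_columns_216 cyclic_difference_columns_270
      cyclic_difference_columns_324
    by auto
  moreover have "0 < n" using n by auto
  ultimately show "\<exists>Q. is_DCA 4 (n + 1) n Q \<and> DCA_normalized 4 n Q \<and>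
                     DCA_P1 4 (n + 1) n Q \<and> DCA_P2 4 n Q"
    using cs zero_bordered_is_DCA zero_bordered_normalized zero_bordered_P1 zero_bordered_P2
    by metis
qed

end
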